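(* Let $W$ be a complex vector space, $\phi(x,z)$ an associate of the additive formal group, and $(a_i(x),b_i(x))$ ($i=1,\dots,n$) $\phi$-quasi compatible ordered pairs in $\mathcal{E}(W)$. Suppose that $$\sum_{i=1}^ng_i(x_1,x_2)a_i(x_1)b_i(x_2)\in\mathrm{Hom}(W,W((x_1,x_2)))$$ with $g_1,\dots,g_n\in\mathbb{C}((x_1,x_2))$. Then $$\sum_{i=1}^ng_i(\phi(x,z),x)Y^\phi_{\mathcal{E}}(a_i(x),z)b_i(x)=\Big(\sum_{i=1}^ng_i(x_1,x)a_i(x_1)b_i(x)\Big)\Big|_{x_1=\phi(x,z)}.$$
   Context: $\mathcal{E}(W)=\mathrm{Hom}(W,W((x)))$; $\mathbb{C}((x_1,x_2))=\mathbb{C}[[x_1,x_2]][x_1^{-1},x_2^{-1}]$. An associate is $\phi(x,z)\in\mathbb{C}((x))[[z]]$ with $\phi(x,0)=x$ and $\phi(\phi(x,x_2),x_0)=\phi(x,x_0+x_2)$. For $g\in\mathbb{C}((x_1,x_2))$, $g(\phi(x,z),x)\in\mathbb{C}((x))[[z]]$ is the substitution $x_1=\phi(x,z),x_2=x$ (negative powers of $\phi$ taken in $\mathbb{C}((x))[[z]]$); similarly for elements of $\mathrm{Hom}(W,W((x_1,x_2)))$. A pair $(a(x),b(x))$ is $\phi$-quasi compatible if $p(x_1,x_2)a(x_1)b(x_2)\in\mathrm{Hom}(W,W((x_1,x_2)))$ for some $p\in\mathbb{C}[[x,y]]$ with $p(\phi(x,z),x)\ne0$; then $Y^\phi_{\mathcal{E}}(a(x),z)b(x):=p(\phi(x,z),x)^{-1}(p(x_1,x)a(x_1)b(x))|_{x_1=\phi(x,z)}\in\mathcal{E}(W)((z))$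 (inverse in $\mathbb{C}((x))((z))$; independent of $p$). *)

theory Defs
  imports "HOL-Computational_Algebra.Formal_Laurent_Series"
begin

text \<open>W is a complex vector space: a type 'w with scalar multiplication sc, assumed
  to satisfy vector_space sc.
  C((x))[[z]] = complex fls fps, C((x))((z)) = complex fls fls (library types).
  W-valued formal series are represented by coefficient functions:
  a(x) in E(W) = Hom(W,W((x))) is a :: int => 'w => 'w, a(x) = sum_n (a n) x^n;
  F in Hom(W,W((x1,x2))) is F :: int => int => 'w => 'w, coefficient of x1^m x2^n;
  an element of Hom(W,W((x))((z))) (or of E(W)((z))) is S :: int => int => 'w => 'w,
  S k p = coefficient of z^k x^p.
  Scalar two-variable series g in C((x1,x2)) are g :: int => int => complex.\<close>

text \<open>Sum of a function over its (finite) support; all sums below are finite.\<close>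
definition fsum :: "('i \<Rightarrow> 'a::comm_monoid_add) \<Rightarrow> 'a" where
  "fsum f = sum f {i. f i \<noteq> 0}"

definition EW :: "(complex \<Rightarrow> 'w::ab_group_add \<Rightarrow> 'w) \<Rightarrow> (int \<Rightarrow> 'w \<Rightarrow> 'w) \<Rightarrow> bool" where
  "EW sc a \<longleftrightarrow> (\<forall>n. Vector_Spaces.linear sc sc (a n)) \<and> (\<forall>w. \<exists>N. \<forall>n<N. a n w = 0)"

text \<open>the values of F lie in W((x1,x2)) = W[[x1,x2]][x1^-1,x2^-1]\<close>
definition trunc2 :: "(int \<Rightarrow> int \<Rightarrow> 'w \<Rightarrow> 'w::zero) \<Rightarrow> bool" where
  "trunc2 F \<longleftrightarrow> (\<forall>w. \<exists>N. \<forall>m n. m < N \<or> n < N \<longrightarrow> F m n w = 0)"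

text \<open>g in C((x1,x2)) = C[[x1,x2]][x1^-1,x2^-1]\<close>
definition laur2 :: "(int \<Rightarrow> int \<Rightarrow> complex) \<Rightarrow> bool" where
  "laur2 g \<longleftrightarrow> (\<exists>N. \<forall>m n. m < N \<or> n < N \<longrightarrow> g m n = 0)"

definition pow2 :: "(int \<Rightarrow> int \<Rightarrow> complex) \<Rightarrow> bool" where
  "pow2 p \<longleftrightarrow> (\<forall>m n. m < 0 \<or> n < 0 \<longrightarrow> p m n = 0)"

definition prod12 :: "(int \<Rightarrow> 'w \<Rightarrow> 'w) \<Rightarrow> (int \<Rightarrow> 'w \<Rightarrow> 'w) \<Rightarrow> int \<Rightarrow> int \<Rightarrow> 'w \<Rightarrow> 'w" where
  "prod12 a b m n w = a m (b n w)"

definition mult2 :: "(complex \<Rightarrow> 'w::ab_group_add \<Rightarrow> 'w) \<Rightarrow> (int \<Rightarrow> int \<Rightarrow> complex)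
    \<Rightarrow> (int \<Rightarrow> int \<Rightarrow> 'w \<Rightarrow> 'w) \<Rightarrow> int \<Rightarrow> int \<Rightarrow> 'w \<Rightarrow> 'w" where
  "mult2 sc g F m n w = fsum (\<lambda>(i, j). sc (g i j) (F (m - i) (n - j) w))"

text \<open>coefficient of z^k x^p in phi(x,z)^m (integer power taken in C((x))[[z]])\<close>
definition phipow :: "complex fls fps \<Rightarrow> int \<Rightarrow> nat \<Rightarrow> int \<Rightarrow> complex" where
  "phipow \<phi> m k p = fls_nth (fps_nth (\<phi> powi m) k) p"

text \<open>associate of the additive formal group:
  phi(x,0) = x and phi(phi(x,x2),x0) = phi(x,x0+x2), compared coefficientwise
  at x0^i x2^j x^p.  The left side is sum_k phi_k(phi(x,x2)) x0^k, where
  phi_k(phi(x,x2)) = sum_m [x^m]phi_k * phi(x,x2)^m.\<close>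
definition associate :: "complex fls fps \<Rightarrow> bool" where
  "associate \<phi> \<longleftrightarrow> fps_nth \<phi> 0 = fls_X \<and>
     (\<forall>i j p. fsum (\<lambda>m. fls_nth (fps_nth \<phi> i) m * phipow \<phi> m j p)
              = of_nat ((i + j) choose j) * fls_nth (fps_nth \<phi> (i + j)) p)"

text \<open>g(phi(x,z),x) in C((x))[[z]], as coefficient function (z^k x^p)\<close>
definition substC :: "complex fls fps \<Rightarrow> (int \<Rightarrow> int \<Rightarrow> complex) \<Rightarrow> int \<Rightarrow> int \<Rightarrow> complex" where
  "substC \<phi> g k p = (if k < 0 then 0 else fsum (\<lambda>(m, n). phipow \<phi> m (nat k) (p - n) * g m n))"

text \<open>F(phi(x,z),x) for F in Hom(W,W((x1,x2))), i.e. set x2 = x and x1 = phi(x,z)\<close>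
definition substW :: "(complex \<Rightarrow> 'w::ab_group_add \<Rightarrow> 'w) \<Rightarrow> complex fls fps
    \<Rightarrow> (int \<Rightarrow> int \<Rightarrow> 'w \<Rightarrow> 'w) \<Rightarrow> int \<Rightarrow> int \<Rightarrow> 'w \<Rightarrow> 'w" where
  "substW sc \<phi> F k p w = (if k < 0 then 0 else fsum (\<lambda>(m, n). sc (phipow \<phi> m (nat k) (p - n)) (F m n w)))"

definition multZ :: "(complex \<Rightarrow> 'w::ab_group_add \<Rightarrow> 'w) \<Rightarrow> (int \<Rightarrow> int \<Rightarrow> complex)
    \<Rightarrow> (int \<Rightarrow> int \<Rightarrow> 'w \<Rightarrow> 'w) \<Rightarrow> int \<Rightarrow> int \<Rightarrow> 'w \<Rightarrow> 'w" where
  "multZ sc c S k p w = fsum (\<lambda>(l, q). sc (c l q) (S (k - l) (p - q) w))"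

definition to_flsfps :: "(int \<Rightarrow> int \<Rightarrow> complex) \<Rightarrow> complex fls fps" where
  "to_flsfps c = Abs_fps (\<lambda>k. Abs_fls (\<lambda>q. c (int k) q))"

text \<open>p(phi(x,z),x)^-1, inverse taken in C((x))((z)), as coefficient function\<close>
definition pinv :: "complex fls fps \<Rightarrow> (int \<Rightarrow> int \<Rightarrow> complex) \<Rightarrow> int \<Rightarrow> int \<Rightarrow> complex" where
  "pinv \<phi> p l q = fls_nth (fls_nth (inverse (fps_to_fls (to_flsfps (substC \<phi> p)))) l) q"

definition qc_witness :: "(complex \<Rightarrow> 'w::ab_group_add \<Rightarrow> 'w) \<Rightarrow> complex fls fps
    \<Rightarrow> (int \<Rightarrow> 'w \<Rightarrow> 'w) \<Rightarrow> (int \<Rightarrow> 'w \<Rightarrow> 'w) \<Rightarrow> (int \<Rightarrow> int \<Rightarrow> complex) \<Rightarrow> bool" where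
  "qc_witness sc \<phi> a b p \<longleftrightarrow> pow2 p \<and> (\<exists>k q. substC \<phi> p k q \<noteq> 0)
      \<and> trunc2 (mult2 sc p (prod12 a b))"

definition quasi_compat :: "(complex \<Rightarrow> 'w::ab_group_add \<Rightarrow> 'w) \<Rightarrow> complex fls fps
    \<Rightarrow> (int \<Rightarrow> 'w \<Rightarrow> 'w) \<Rightarrow> (int \<Rightarrow> 'w \<Rightarrow> 'w) \<Rightarrow> bool" where
  "quasi_compat sc \<phi> a b \<longleftrightarrow> (\<exists>p. qc_witness sc \<phi> a b p)"

text \<open>Y^phi_E(a(x),z) b(x) for a given witness p\<close>
definition Yp :: "(complex \<Rightarrow> 'w::ab_group_add \<Rightarrow> 'w) \<Rightarrow> complex fls fps \<Rightarrow> (int \<Rightarrow> int \<Rightarrow> complex)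
    \<Rightarrow> (int \<Rightarrow> 'w \<Rightarrow> 'w) \<Rightarrow> (int \<Rightarrow> 'w \<Rightarrow> 'w) \<Rightarrow> int \<Rightarrow> int \<Rightarrow> 'w \<Rightarrow> 'w" where
  "Yp sc \<phi> p a b = multZ sc (pinv \<phi> p) (substW sc \<phi> (mult2 sc p (prod12 a b)))"

definition YE :: "(complex \<Rightarrow> 'w::ab_group_add \<Rightarrow> 'w) \<Rightarrow> complex fls fps
    \<Rightarrow> (int \<Rightarrow> 'w \<Rightarrow> 'w) \<Rightarrow> (int \<Rightarrow> 'w \<Rightarrow> 'w) \<Rightarrow> int \<Rightarrow> int \<Rightarrow> 'w \<Rightarrow> 'w" where
  "YE sc \<phi> a b = Yp sc \<phi> (SOME p. qc_witness sc \<phi> a b p) a b"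

end

theory Submission
  imports Defs
begin

text \<open>Take witnesses \<open>p\<^sub>i\<close> of quasi compatibility and let \<open>Q\<close> be their product, so
  \<open>Q = R\<^sub>i p\<^sub>i\<close>. Then \<open>Q g\<^sub>i a\<^sub>i(x\<^sub>1) b\<^sub>i(x\<^sub>2) = g\<^sub>i R\<^sub>i (p\<^sub>i a\<^sub>i(x\<^sub>1) b\<^sub>i(x\<^sub>2))\<close> lies in
  \<open>Hom(W,W((x\<^sub>1,x\<^sub>2)))\<close>. On such series the substitution \<open>x\<^sub>1 = \<phi>(x,z), x\<^sub>2 = x\<close> is
  multiplicative, because \<open>\<phi>(x,0) = x\<close> makes \<open>\<phi>\<close> invertible in \<open>\<complex>((x))[[z]]\<close>, so that
  \<open>\<phi>^(m+m') = \<phi>^m \<phi>^m'\<close>. Hence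
  \<open>g\<^sub>i(\<phi>(x,z),x) Y(a\<^sub>i(x),z)b\<^sub>i(x) = Q(\<phi>(x,z),x)\<inverse> (Q g\<^sub>i a\<^sub>i b\<^sub>i)(\<phi>(x,z),x)\<close>, and summing
  over \<open>i\<close> and using multiplicativity once more for \<open>Q \<Sum> g\<^sub>i a\<^sub>i b\<^sub>i\<close> gives the claim.\<close>

section \<open>Sums with finite support\<close>

lemma fsum_eq_sum:
  assumes "finite S" "\<And>x. x \<notin> S \<Longrightarrow> f x = 0"
  shows "fsum f = sum f S"
  unfolding fsum_def by (rule sum.mono_neutral_left) (use assms in auto)

lemma fsum_nonzeroD: "fsum f \<noteq> 0 \<Longrightarrow> \<exists>x. f x \<noteq> 0"
  unfolding fsum_def by (metis (mono_tags, lifting) mem_Collect_eq sum.neutral)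

lemma fsum_neutral: "(\<And>x. f x = 0) \<Longrightarrow> fsum f = 0"
  using fsum_nonzeroD by blast

lemma fsum_single:
  assumes "\<And>x. x \<noteq> a \<Longrightarrow> f x = 0"
  shows "fsum f = f a"
  using fsum_eq_sum[of "{a}" f] assms by auto

lemma fsum_reindex_bij:
  assumes "bij h"
  shows "fsum (\<lambda>x. f (h x)) = fsum f"
proof -
  have "bij_betw h (h -` {y. f y \<noteq> 0}) {y. f y \<noteq> 0}"
    using assms by (auto simp: bij_betw_def bij_def inj_on_def intro: inj_on_subset)
  then show ?thesis
    unfolding fsum_def using sum.reindex_bij_betw[of h _ _ f] by (simp add: vimage_def)
qed

lemma fsum_translate: "fsum (\<lambda>z. f (fst z + a, snd z + b)) = fsum f"
  for a b :: "'a::group_add"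
  by (rule fsum_reindex_bij) (rule bij_betw_byWitness[where f'="\<lambda>z. (fst z - a, snd z - b)"], auto)

lemma fsum_nested:
  assumes "finite {(x, y). G x y \<noteq> 0}"
  shows "fsum (\<lambda>x. fsum (G x)) = fsum (\<lambda>z. G (fst z) (snd z))"
proof -
  let ?S = "{(x, y). G x y \<noteq> 0}"
  define A where "A = fst ` ?S"
  define B where "B = snd ` ?S"
  have fin: "finite A" "finite B" using assms by (auto simp: A_def B_def)
  have "fsum (G x) = sum (G x) B" for x
    by (rule fsum_eq_sum) (use fin in \<open>auto simp: B_def image_iff\<close>)
  moreover have "fsum (\<lambda>x. sum (G x) B) = sum (\<lambda>x. sum (G x) B) A"
    by (rule fsum_eq_sum) (use fin in \<open>auto simp: A_def B_def image_iff intro!: sum.neutral\<close>)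
  moreover have "fsum (\<lambda>z. G (fst z) (snd z)) = sum (\<lambda>z. G (fst z) (snd z)) (A \<times> B)"
    by (rule fsum_eq_sum) (use fin in \<open>auto simp: A_def B_def image_iff\<close>)
  ultimately show ?thesis by (simp add: sum.cartesian_product case_prod_beta')
qed

lemma fsum_swap:
  assumes "finite {(x, y). G x y \<noteq> 0}"
  shows "fsum (\<lambda>x. fsum (\<lambda>y. G x y)) = fsum (\<lambda>y. fsum (\<lambda>x. G x y))"
proof -
  have "{(y, x). G x y \<noteq> 0} = prod.swap ` {(x, y). G x y \<noteq> 0}" by auto
  then have fin': "finite {(y, x). G x y \<noteq> 0}" using assms by simp
  have "fsum (\<lambda>x. fsum (\<lambda>y. G x y)) = fsum (\<lambda>z. G (fst z) (snd z))"
    by (rule fsum_nested[OF assms])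
  also have "\<dots> = fsum (\<lambda>z. G (snd z) (fst z))"
    using fsum_reindex_bij[of prod.swap "\<lambda>z. G (snd z) (fst z)"] by simp
  also have "\<dots> = fsum (\<lambda>y. fsum (\<lambda>x. G x y))"
    using fsum_nested[OF fin'] by simp
  finally show ?thesis .
qed

lemma fsum_rotate:
  assumes fin: "finite {(u, v). D u (fst v) (snd v) \<noteq> 0}"
  shows "fsum (\<lambda>u. fsum (\<lambda>y. fsum (\<lambda>x. D u y x))) = fsum (\<lambda>y. fsum (\<lambda>x. fsum (\<lambda>u. D u y x)))"
proof -
  have "finite {(y, x). D u y x \<noteq> 0}" for u
    by (rule finite_subset[OF _ finite_imageI[OF fin, of "snd"]]) (force simp: image_iff)
  then have "fsum (\<lambda>u. fsum (\<lambda>y. fsum (\<lambda>x. D u y x))) = fsum (\<lambda>u. fsum (\<lambda>v. D u (fst v) (snd v)))"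
    by (simp add: fsum_nested)
  also have "\<dots> = fsum (\<lambda>v. fsum (\<lambda>u. D u (fst v) (snd v)))"
    by (rule fsum_swap[OF fin])
  also have "\<dots> = fsum (\<lambda>y. fsum (\<lambda>x. fsum (\<lambda>u. D u y x)))"
  proof -
    have "{(y, x). fsum (\<lambda>u. D u y x) \<noteq> 0} \<subseteq> snd ` {(u, v). D u (fst v) (snd v) \<noteq> 0}"
      by (force dest!: fsum_nonzeroD simp: image_iff)
    then have "finite {(y, x). fsum (\<lambda>u. D u y x) \<noteq> 0}"
      using fin finite_subset by blast
    from fsum_nested[OF this] show ?thesis by simp
  qed
  finally show ?thesis .
qed

lemma fsum_add:
  assumes "finite {x. f x \<noteq> 0}" "finite {x. g x \<noteq> 0}"
  shows "fsum (\<lambda>x. f x + g x) = fsum f + fsum g"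
proof -
  let ?S = "{x. f x \<noteq> 0} \<union> {x. g x \<noteq> 0}"
  have "fsum (\<lambda>x. f x + g x) = sum (\<lambda>x. f x + g x) ?S"
    and "fsum f = sum f ?S" and "fsum g = sum g ?S"
    by (rule fsum_eq_sum; use assms in auto)+
  then show ?thesis by (simp add: sum.distrib)
qed

lemma fsum_sum:
  assumes "finite T" "\<And>t. t \<in> T \<Longrightarrow> finite {x. f t x \<noteq> 0}"
  shows "fsum (\<lambda>x. \<Sum>t\<in>T. f t x) = (\<Sum>t\<in>T. fsum (f t))"
  using assms
proof (induction T rule: finite_induct)
  case empty
  then show ?case by (simp add: fsum_neutral)
next
  case (insert t T)
  have "{x. (\<Sum>t\<in>T. f t x) \<noteq> 0} \<subseteq> (\<Union>t\<in>T. {x. f t x \<noteq> 0})"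
    by (auto intro: ccontr simp: sum.neutral)
  then have "finite {x. (\<Sum>t\<in>T. f t x) \<noteq> 0}"
    using insert by (auto intro: finite_subset)
  then have "fsum (\<lambda>x. f t x + (\<Sum>t\<in>T. f t x)) = fsum (f t) + fsum (\<lambda>x. \<Sum>t\<in>T. f t x)"
    using insert by (intro fsum_add) auto
  then show ?case using insert by simp
qed

lemma fsum_mult_left: "c * fsum f = fsum (\<lambda>x. c * f x)"
  for c :: "'a::field"
proof (cases "c = 0")
  case False
  then have "{x. c * f x \<noteq> 0} = {x. f x \<noteq> 0}" by auto
  then show ?thesis unfolding fsum_def by (simp add: sum_distrib_left)
qed (simp add: fsum_neutral)

lemma fsum_mult_right: "fsum f * c = fsum (\<lambda>x. f x * c)"
  for c :: "'a::field"
  using fsum_mult_left[of c f] by (simp add: mult.commute)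

context vector_space
begin

lemma fsum_scale_right: "scale c (fsum f) = fsum (\<lambda>x. scale c (f x))"
proof (cases "c = 0")
  case False
  then have "{x. scale c (f x) \<noteq> 0} = {x. f x \<noteq> 0}" by auto
  then show ?thesis unfolding fsum_def by (simp add: scale_sum_right)
qed (simp add: fsum_neutral)

lemma fsum_scale_left: "scale (fsum f) v = fsum (\<lambda>x. scale (f x) v)"
proof (cases "v = 0")
  case False
  then have "{x. scale (f x) v \<noteq> 0} = {x. f x \<noteq> 0}" by auto
  then show ?thesis unfolding fsum_def by (simp add: scale_sum_left)
qed (simp add: fsum_neutral)

end


section \<open>Iterated Laurent series in \<open>z\<close> and \<open>x\<close>\<close>

text \<open>\<open>c k q\<close> is the coefficient of \<open>z^k x^q\<close> of an element of \<open>A((x))((z))\<close>.\<close>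
definition iter_laurent :: "(int \<Rightarrow> int \<Rightarrow> 'a::zero) \<Rightarrow> bool" where
  "iter_laurent c \<longleftrightarrow> (\<exists>K. \<forall>k q. k < K \<longrightarrow> c k q = 0) \<and>
     (\<forall>R. \<exists>L. \<forall>k q. k \<le> R \<longrightarrow> q < L \<longrightarrow> c k q = 0)"

definition conv2 :: "(int \<Rightarrow> int \<Rightarrow> complex) \<Rightarrow> (int \<Rightarrow> int \<Rightarrow> complex) \<Rightarrow> int \<Rightarrow> int \<Rightarrow> complex" where
  "conv2 c d k p = fsum (\<lambda>(l, q). c l q * d (k - l) (p - q))"

definition coeffs2 :: "'a::zero fls fls \<Rightarrow> int \<Rightarrow> int \<Rightarrow> 'a" where
  "coeffs2 A k q = fls_nth (fls_nth A k) q"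

lemma iter_laurentE:
  assumes "iter_laurent c"
  obtains K L where "\<And>k q. k < K \<Longrightarrow> c k q = 0" "\<And>R k q. k \<le> R \<Longrightarrow> q < L R \<Longrightarrow> c k q = 0"
proof -
  from assms obtain K where "\<forall>k q. k < K \<longrightarrow> c k q = 0"
    and "\<forall>R. \<exists>L. \<forall>k q. k \<le> R \<longrightarrow> q < L \<longrightarrow> c k q = 0"
    unfolding iter_laurent_def by blast
  then show ?thesis using that by metis
qed

lemma iter_laurentI:
  assumes "\<And>k q. k < K \<Longrightarrow> c k q = 0" "\<And>R k q. k \<le> R \<Longrightarrow> q < L R \<Longrightarrow> c k q = 0"
  shows "iter_laurent c"
  unfolding iter_laurent_def using assms by blast

lemma multZ_def': "multZ sc c S k p w = fsum (\<lambda>z. sc (c (fst z) (snd z)) (S (k - fst z) (p - snd z) w))"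
  unfolding multZ_def by (simp add: case_prod_beta')

lemma conv2_def': "conv2 c d k p = fsum (\<lambda>z. c (fst z) (snd z) * d (k - fst z) (p - snd z))"
  unfolding conv2_def by (simp add: case_prod_beta')

lemma iter_laurent_finite_overlap:
  fixes c :: "int \<Rightarrow> int \<Rightarrow> 'a::zero" and X :: "int \<Rightarrow> int \<Rightarrow> 'b::zero"
  assumes "iter_laurent c" "iter_laurent X"
  shows "finite {z. c (fst z) (snd z) \<noteq> 0 \<and> X (k - fst z) (p - snd z) \<noteq> 0}"
proof -
  obtain K1 L1 where c1: "\<And>k q. k < K1 \<Longrightarrow> c k q = 0"
    and c2: "\<And>R k q. k \<le> R \<Longrightarrow> q < L1 R \<Longrightarrow> c k q = 0"
    using iter_laurentE[OF assms(1)] by blast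
  obtain K2 L2 where x1: "\<And>k q. k < K2 \<Longrightarrow> X k q = 0"
    and x2: "\<And>R k q. k \<le> R \<Longrightarrow> q < L2 R \<Longrightarrow> X k q = 0"
    using iter_laurentE[OF assms(2)] by blast
  have "{z. c (fst z) (snd z) \<noteq> 0 \<and> X (k - fst z) (p - snd z) \<noteq> 0}
      \<subseteq> {K1..k - K2} \<times> {L1 (k - K2)..p - L2 (k - K1)}"
  proof (clarsimp)
    fix l q assume a: "c l q \<noteq> 0" and b: "X (k - l) (p - q) \<noteq> 0"
    have "K1 \<le> l" "K2 \<le> k - l" using a b c1 x1 by (meson not_le)+
    moreover have "L1 (k - K2) \<le> q" using a c2[of l "k - K2"] \<open>K2 \<le> k - l\<close> by force
    moreover have "L2 (k - K1) \<le> p - q" using b x2[of "k - l" "k - K1"] \<open>K1 \<le> l\<close> by force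
    ultimately show "K1 \<le> l \<and> l \<le> k - K2 \<and> L1 (k - K2) \<le> q \<and> q \<le> p - L2 (k - K1)" by simp
  qed
  then show ?thesis by (rule finite_subset) simp
qed

lemma coeffs2_iter_laurent: "iter_laurent (coeffs2 A)"
proof (rule iter_laurentI)
  show "k < fls_subdegree A \<Longrightarrow> coeffs2 A k q = 0" for k q by (simp add: coeffs2_def)
  define L where "L R = Min (insert 0 ((\<lambda>k. fls_subdegree (fls_nth A k)) ` {fls_subdegree A..R}))" for R
  show "coeffs2 A k q = 0" if "k \<le> R" "q < L R" for R k q
  proof (cases "k < fls_subdegree A")
    case False
    then have "L R \<le> fls_subdegree (fls_nth A k)"
      unfolding L_def using that by (intro Min_le) auto
    then show ?thesis using that by (simp add: coeffs2_def)
  qed (simp add: coeffs2_def)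
qed

context
  fixes sc :: "complex \<Rightarrow> 'w::ab_group_add \<Rightarrow> 'w"
  assumes vs: "vector_space sc"
begin

interpretation v: vector_space sc by (rule vs)

lemma multZ_finite_support:
  assumes "iter_laurent c" "iter_laurent (\<lambda>k p. X k p w)"
  shows "finite {z. sc (c (fst z) (snd z)) (X (k - fst z) (p - snd z) w) \<noteq> 0}"
  by (rule finite_subset[OF _ iter_laurent_finite_overlap[OF assms]]) auto

lemma multZ_iter_laurent:
  assumes c: "iter_laurent c" and X: "iter_laurent (\<lambda>k p. X k p w)"
  shows "iter_laurent (\<lambda>k p. multZ sc c X k p w)"
proof -
  obtain K1 L1 where c1: "\<And>k q. k < K1 \<Longrightarrow> c k q = 0"
    and c2: "\<And>R k q. k \<le> R \<Longrightarrow> q < L1 R \<Longrightarrow> c k q = 0"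
    using iter_laurentE[OF c] by blast
  obtain K2 L2 where x1: "\<And>k q. k < K2 \<Longrightarrow> X k q w = 0"
    and x2: "\<And>R k q. k \<le> R \<Longrightarrow> q < L2 R \<Longrightarrow> X k q w = 0"
    using iter_laurentE[OF X] by blast
  have nz: "K1 + K2 \<le> k \<and> (\<forall>R. k \<le> R \<longrightarrow> L1 (R - K2) + L2 (R - K1) \<le> q)"
    if nz: "multZ sc c X k q w \<noteq> 0" for k q
  proof -
    obtain l r where a: "c l r \<noteq> 0" and b: "X (k - l) (q - r) w \<noteq> 0"
      using fsum_nonzeroD[OF nz[unfolded multZ_def']] by auto
    have "K1 \<le> l" "K2 \<le> k - l" using a b c1 x1 by (meson not_le)+
    moreover have "L1 (R - K2) \<le> r" "L2 (R - K1) \<le> q - r" if "k \<le> R" for R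
      using a b c2[of l "R - K2"] x2[of "k - l" "R - K1"] that \<open>K1 \<le> l\<close> \<open>K2 \<le> k - l\<close> by force+
    ultimately show ?thesis by force
  qed
  show ?thesis
    by (rule iter_laurentI[where K="K1 + K2" and L="\<lambda>R. L1 (R - K2) + L2 (R - K1)"])
      (use nz in \<open>fastforce+\<close>)
qed

lemma multZ_assoc:
  assumes c: "iter_laurent c" and d: "iter_laurent d" and X: "\<And>w. iter_laurent (\<lambda>k p. X k p w)"
  shows "multZ sc c (multZ sc d X) = multZ sc (conv2 c d) X"
proof (intro ext)
  fix k p w
  obtain K1 L1 where c1: "\<And>k q. k < K1 \<Longrightarrow> c k q = 0"
    and c2: "\<And>R k q. k \<le> R \<Longrightarrow> q < L1 R \<Longrightarrow> c k q = 0"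
    using iter_laurentE[OF c] by blast
  obtain K2 L2 where d1: "\<And>k q. k < K2 \<Longrightarrow> d k q = 0"
    and d2: "\<And>R k q. k \<le> R \<Longrightarrow> q < L2 R \<Longrightarrow> d k q = 0"
    using iter_laurentE[OF d] by blast
  obtain K3 L3 where x1: "\<And>k q. k < K3 \<Longrightarrow> X k q w = 0"
    and x2: "\<And>R k q. k \<le> R \<Longrightarrow> q < L3 R \<Longrightarrow> X k q w = 0"
    using iter_laurentE[OF X[of w]] by blast
  define G where "G a b = sc (c (fst a) (snd a) * d (fst b) (snd b))
      (X (k - fst a - fst b) (p - snd a - snd b) w)" for a b :: "int \<times> int"
  have fin: "finite {(a, b). G a b \<noteq> 0}"
  proof (rule finite_subset)
    show "{(a, b). G a b \<noteq> 0} \<subseteq>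
        ({K1..k - K2 - K3} \<times> {L1 (k - K2 - K3)..p - L3 (k - K1 - K2) - L2 (k - K1 - K3)})
      \<times> ({K2..k - K1 - K3} \<times> {L2 (k - K1 - K3)..p - L3 (k - K1 - K2) - L1 (k - K2 - K3)})"
    proof (rule subsetI)
      fix z assume z_in: "z \<in> {(a, b). G a b \<noteq> 0}"
      obtain a1 a2 b1 b2 where z: "z = ((a1, a2), (b1, b2))" by (metis prod.collapse)
      have a: "c a1 a2 \<noteq> 0" and b: "d b1 b2 \<noteq> 0" and x: "X (k - a1 - b1) (p - a2 - b2) w \<noteq> 0"
        using z_in by (auto simp: z G_def)
      have "K1 \<le> a1" "K2 \<le> b1" "K3 \<le> k - a1 - b1" using a b x c1 d1 x1 by (meson not_le)+
      moreover have "L1 (k - K2 - K3) \<le> a2" "L2 (k - K1 - K3) \<le> b2" "L3 (k - K1 - K2) \<le> p - a2 - b2"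
        using a b x c2[of a1 "k - K2 - K3"] d2[of b1 "k - K1 - K3"] x2[of "k - a1 - b1" "k - K1 - K2"]
          calculation by force+
      ultimately show "z \<in> ({K1..k - K2 - K3} \<times> {L1 (k - K2 - K3)..p - L3 (k - K1 - K2) - L2 (k - K1 - K3)})
      \<times> ({K2..k - K1 - K3} \<times> {L2 (k - K1 - K3)..p - L3 (k - K1 - K2) - L1 (k - K2 - K3)})"
        by (simp add: z)
    qed
  qed simp
  let ?G' = "\<lambda>u a. G a (fst u - fst a, snd u - snd a)"
  have "{(u, a). ?G' u a \<noteq> 0}
      \<subseteq> (\<lambda>(a, b). ((fst a + fst b, snd a + snd b), a)) ` {(a, b). G a b \<noteq> 0}"
  proof (rule subsetI)
    fix z assume z_in: "z \<in> {(u, a). ?G' u a \<noteq> 0}"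
    obtain u a where z: "z = (u, a)" by (metis prod.collapse)
    show "z \<in> (\<lambda>(a, b). ((fst a + fst b, snd a + snd b), a)) ` {(a, b). G a b \<noteq> 0}"
      using z_in by (intro image_eqI[of _ _ "(a, (fst u - fst a, snd u - snd a))"]) (auto simp: z)
  qed
  then have fin': "finite {(u, a). ?G' u a \<noteq> 0}"
    using fin finite_subset by blast
  have "multZ sc (conv2 c d) X k p w = fsum (\<lambda>u. fsum (\<lambda>a. ?G' u a))"
    unfolding multZ_def' conv2_def' v.fsum_scale_left G_def by simp
  also have "\<dots> = fsum (\<lambda>a. fsum (\<lambda>u. ?G' u a))"
    by (rule fsum_swap[OF fin'])
  also have "\<dots> = fsum (\<lambda>a. fsum (\<lambda>b. G a b))"
    using fsum_translate[of "G a" "- fst a" "- snd a" for a] by simp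
  also have "\<dots> = multZ sc c (multZ sc d X) k p w"
    unfolding multZ_def' v.fsum_scale_right G_def by (simp add: diff_diff_eq)
  finally show "multZ sc c (multZ sc d X) k p w = multZ sc (conv2 c d) X k p w" ..
qed

lemma multZ_one: "multZ sc (coeffs2 1) X = X"
proof (intro ext)
  fix k p w
  have "multZ sc (coeffs2 1) X k p w
      = (\<lambda>z. sc (coeffs2 1 (fst z) (snd z)) (X (k - fst z) (p - snd z) w)) (0, 0)"
    unfolding multZ_def' by (rule fsum_single) (auto simp: coeffs2_def)
  then show "multZ sc (coeffs2 1) X k p w = X k p w" by (simp add: coeffs2_def)
qed

lemma multZ_sum:
  assumes "iter_laurent c" "finite T" "\<And>t w. t \<in> T \<Longrightarrow> iter_laurent (\<lambda>k p. X t k p w)"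
  shows "multZ sc c (\<lambda>k p w. \<Sum>t\<in>T. X t k p w) k p w = (\<Sum>t\<in>T. multZ sc c (X t) k p w)"
  unfolding multZ_def' v.scale_sum_right
  by (rule fsum_sum[OF assms(2)]) (rule multZ_finite_support[OF assms(1,3)])

end

lemma coeffs2_inject: "coeffs2 A = coeffs2 B \<Longrightarrow> A = B"
  unfolding coeffs2_def by (metis fls_eq_iff)

lemma fls_nth_mult_fsum:
  fixes a b :: "'a::comm_ring_1 fls"
  shows "fls_nth (a * b) r = fsum (\<lambda>q. fls_nth a q * fls_nth b (r - q))"
proof -
  have "fsum (\<lambda>q. fls_nth a q * fls_nth b (r - q))
      = (\<Sum>q=fls_subdegree a..r - fls_subdegree b. fls_nth a q * fls_nth b (r - q))"
    by (rule fsum_eq_sum) auto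
  then show ?thesis by (simp add: fls_times_nth(2))
qed

lemma conv2_coeffs2: "conv2 (coeffs2 A) (coeffs2 B) = coeffs2 (A * B)"
proof (intro ext)
  fix k p
  let ?S = "{fls_subdegree A..k - fls_subdegree B}"
  have "coeffs2 (A * B) k p = (\<Sum>l\<in>?S. fls_nth (fls_nth A l * fls_nth B (k - l)) p)"
    by (simp add: coeffs2_def fls_times_nth(2) fls_nth_sum)
  also have "\<dots> = fsum (\<lambda>l. fls_nth (fls_nth A l * fls_nth B (k - l)) p)"
    by (rule fsum_eq_sum[symmetric]) auto
  also have "\<dots> = fsum (\<lambda>l. fsum (\<lambda>q. coeffs2 A l q * coeffs2 B (k - l) (p - q)))"
    by (simp add: fls_nth_mult_fsum coeffs2_def)
  also have "\<dots> = conv2 (coeffs2 A) (coeffs2 B) k p"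
    unfolding conv2_def'
    by (rule fsum_nested, rule finite_subset[OF _ iter_laurent_finite_overlap[OF coeffs2_iter_laurent
          coeffs2_iter_laurent, of A B k p]]) auto
  finally show "conv2 (coeffs2 A) (coeffs2 B) k p = coeffs2 (A * B) k p" ..
qed

lemma coeffs2_to_flsfps:
  assumes "\<And>k q. k < 0 \<Longrightarrow> c k q = 0" and "iter_laurent c"
  shows "coeffs2 (fps_to_fls (to_flsfps c)) = c"
proof (intro ext)
  fix k q
  obtain L where L: "\<And>R k q. k \<le> R \<Longrightarrow> q < L R \<Longrightarrow> c k q = 0"
    using iter_laurentE[OF assms(2)] by metis
  show "coeffs2 (fps_to_fls (to_flsfps c)) k q = c k q"
  proof (cases "k < 0")
    case False
    have "fls_nth (Abs_fls (\<lambda>q. c k q)) q = c k q"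
      by (rule nth_Abs_fls_ex_lower_bound) (use L[of k k] in blast)
    then show ?thesis using False by (simp add: coeffs2_def to_flsfps_def)
  qed (simp add: coeffs2_def assms(1))
qed

lemma pinv_eq_coeffs2: "pinv \<phi> p = coeffs2 (inverse (fps_to_fls (to_flsfps (substC \<phi> p))))"
  by (intro ext) (simp add: pinv_def coeffs2_def)


section \<open>Double Laurent series and transposition\<close>

text \<open>\<open>X m n\<close> is the coefficient of \<open>x\<^sub>1^m x\<^sub>2^n\<close> of an element of \<open>A((x\<^sub>1,x\<^sub>2))\<close>.\<close>
definition double_laurent :: "(int \<Rightarrow> int \<Rightarrow> 'a::zero) \<Rightarrow> bool" where
  "double_laurent X \<longleftrightarrow> (\<exists>N. \<forall>m n. m < N \<or> n < N \<longrightarrow> X m n = 0)"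

definition transpose2 :: "(int \<Rightarrow> int \<Rightarrow> 'a) \<Rightarrow> int \<Rightarrow> int \<Rightarrow> 'a" where
  "transpose2 c k p = c p k"

lemma double_laurentE:
  assumes "double_laurent X"
  obtains N where "\<And>m n. m < N \<Longrightarrow> X m n = 0" "\<And>m n. n < N \<Longrightarrow> X m n = 0"
  using assms unfolding double_laurent_def by blast

lemma double_laurent_iter_laurent: "double_laurent X \<Longrightarrow> iter_laurent X"
  unfolding double_laurent_def iter_laurent_def by blast

lemma double_laurent_transpose_iter_laurent: "double_laurent X \<Longrightarrow> iter_laurent (transpose2 X)"
  unfolding double_laurent_def iter_laurent_def transpose2_def by blast

lemma mult2_eq_multZ: "mult2 = multZ"
  by (intro ext) (simp add: mult2_def multZ_def)

lemma multZ_transpose: "multZ sc c X k p w = multZ sc (transpose2 c) (transpose2 X) p k w"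
  unfolding multZ_def' transpose2_def
  using fsum_reindex_bij[of prod.swap "\<lambda>z. sc (c (snd z) (fst z)) (X (k - snd z) (p - fst z) w)"]
  by simp

lemma conv2_transpose: "conv2 c d k p = conv2 (transpose2 c) (transpose2 d) p k"
  unfolding conv2_def' transpose2_def
  using fsum_reindex_bij[of prod.swap "\<lambda>z. c (snd z) (fst z) * d (k - snd z) (p - fst z)"]
  by simp

lemma transpose2_multZ: "transpose2 (multZ sc d X) = multZ sc (transpose2 d) (transpose2 X)"
  by (intro ext) (simp add: transpose2_def multZ_transpose[of sc d X])

context
  fixes sc :: "complex \<Rightarrow> 'w::ab_group_add \<Rightarrow> 'w"
  assumes vs: "vector_space sc"
begin

lemma multZ_assoc_transposed:
  assumes c: "iter_laurent (transpose2 c)" and d: "iter_laurent (transpose2 d)"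
    and X: "\<And>w. iter_laurent (\<lambda>k p. X p k w)"
  shows "multZ sc c (multZ sc d X) = multZ sc (conv2 c d) X"
proof (intro ext)
  fix k p w
  have X': "iter_laurent (\<lambda>k p. transpose2 X k p w)" for w
    using X[of w] by (simp add: transpose2_def)
  have "conv2 (transpose2 c) (transpose2 d) = transpose2 (conv2 c d)"
    by (intro ext) (simp add: transpose2_def conv2_transpose[of c d])
  then show "multZ sc c (multZ sc d X) k p w = multZ sc (conv2 c d) X k p w"
    by (simp add: multZ_transpose[of sc _ _ k p] transpose2_multZ multZ_assoc[OF vs c d X'])
qed

lemma multZ_iter_laurent_transposed:
  assumes c: "iter_laurent (transpose2 c)" and X: "iter_laurent (\<lambda>k p. X p k w)"
  shows "iter_laurent (\<lambda>k p. multZ sc c X p k w)"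
  using multZ_iter_laurent[OF vs c, of "transpose2 X" w] X
  by (simp add: transpose2_def multZ_transpose[of sc c X])

lemma multZ_sum_transposed:
  assumes c: "iter_laurent (transpose2 c)" and "finite T"
    and X: "\<And>t w. t \<in> T \<Longrightarrow> iter_laurent (\<lambda>k p. X t p k w)"
  shows "multZ sc c (\<lambda>k p w. \<Sum>t\<in>T. X t k p w) k p w = (\<Sum>t\<in>T. multZ sc c (X t) k p w)"
proof -
  have "transpose2 (\<lambda>k p w. \<Sum>t\<in>T. X t k p w) = (\<lambda>k p w. \<Sum>t\<in>T. transpose2 (X t) k p w)"
    by (intro ext) (simp add: transpose2_def)
  moreover have "iter_laurent (\<lambda>k p. transpose2 (X t) k p w)" if "t \<in> T" for t w
    using X[OF that, of w] by (simp add: transpose2_def)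
  ultimately show ?thesis
    by (simp add: multZ_transpose[of sc c] multZ_sum[OF vs c \<open>finite T\<close>])
qed

end

section \<open>Powers of the associate\<close>

lemma fps_to_fls_powi:
  fixes \<phi> :: "'a::field fps"
  assumes "fps_nth \<phi> 0 \<noteq> 0"
  shows "fps_to_fls (\<phi> powi m) = fps_to_fls \<phi> powi m"
  using assms by (cases "0 \<le> m")
    (simp_all add: power_int_def fps_to_fls_power fls_inverse_fps_to_fls subdegree_eq_0_iff
      flip: power_inverse)

lemma fps_powi_add:
  fixes \<phi> :: "'a::field fps"
  assumes "fps_nth \<phi> 0 \<noteq> 0"
  shows "\<phi> powi (a + b) = \<phi> powi a * \<phi> powi b"
proof -
  have "fps_to_fls \<phi> \<noteq> 0" using assms by (metis fps_to_fls_eq_0_iff fps_zero_nth)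
  then have "fps_to_fls (\<phi> powi (a + b)) = fps_to_fls (\<phi> powi a * \<phi> powi b)"
    by (simp only: fps_to_fls_powi[OF assms] fls_times_fps_to_fls) (rule power_int_add, simp)
  then show ?thesis by (simp only: fps_to_fls_eq_iff)
qed

lemma phipow_add:
  assumes "fps_nth \<phi> 0 \<noteq> 0"
  shows "phipow \<phi> (a + b) K r = (\<Sum>t=0..K. fsum (\<lambda>q. phipow \<phi> a t q * phipow \<phi> b (K - t) (r - q)))"
  unfolding phipow_def fps_powi_add[OF assms] by (simp add: fps_mult_nth fls_nth_sum fls_nth_mult_fsum)

text \<open>Since \<open>\<phi>(x,z) = x + O(z)\<close>, every power \<open>\<phi>^m\<close> is slope bounded with \<open>d = m\<close>.\<close>
definition slope_bounded :: "nat \<Rightarrow> int \<Rightarrow> int \<Rightarrow> complex fls fps \<Rightarrow> bool" where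
  "slope_bounded K M d F \<longleftrightarrow> (\<forall>l\<le>K. \<forall>r. r < d - M * int l \<longrightarrow> fls_nth (fps_nth F l) r = 0)"

lemma slope_bounded_mult:
  assumes "slope_bounded K M d F" "slope_bounded K M e G"
  shows "slope_bounded K M (d + e) (F * G)"
  unfolding slope_bounded_def
proof (intro allI impI)
  fix l r assume l: "l \<le> K" and r: "r < d + e - M * int l"
  have "fls_nth (fps_nth F t) q * fls_nth (fps_nth G (l - t)) (r - q) = 0" if "t \<le> l" for t q
  proof (cases "q < d - M * int t")
    case False
    then have "r - q < e - M * int (l - t)" using r that by (simp add: of_nat_diff algebra_simps)
    then show ?thesis using assms(2) that l unfolding slope_bounded_def by auto
  qed (use assms(1) that l in \<open>auto simp: slope_bounded_def\<close>)
  then show "fls_nth (fps_nth (F * G) l) r = 0"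
    by (simp add: fps_mult_nth fls_nth_sum fls_nth_mult_fsum fsum_neutral)
qed

lemma slope_bounded_power: "slope_bounded K M d F \<Longrightarrow> slope_bounded K M (int n * d) (F ^ n)"
proof (induction n)
  case 0
  then show ?case by (simp add: slope_bounded_def fps_one_nth)
next
  case (Suc n)
  then have "slope_bounded K M (d + int n * d) (F * F ^ n)" by (intro slope_bounded_mult)
  then show ?case by (simp add: algebra_simps)
qed

lemma fls_nth_times_X: "fls_nth (a * fls_X) (r + 1) = fls_nth a r"
  for a :: "'a::comm_ring_1 fls"
  using fsum_single[of r "\<lambda>q. fls_nth a q * fls_nth fls_X (r + 1 - q)"]
  by (simp add: fls_nth_mult_fsum)

lemma slope_bounded_inverse:
  assumes X: "fps_nth \<phi> 0 = fls_X" and M: "0 \<le> M" and S: "slope_bounded K M 1 \<phi>"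
  shows "slope_bounded K M (-1) (inverse \<phi>)"
  unfolding slope_bounded_def
proof (intro allI impI)
  fix l r
  show "l \<le> K \<Longrightarrow> r < - 1 - M * int l \<Longrightarrow> fls_nth (fps_nth (inverse \<phi>) l) r = 0"
  proof (induction l arbitrary: r rule: less_induct)
    case (less l)
    let ?\<psi> = "inverse \<phi>"
    have "(\<Sum>t=0..l. fps_nth ?\<psi> t * fps_nth \<phi> (l - t)) = (if l = 0 then 1 else 0)"
      using arg_cong[OF inverse_mult_eq_1[of \<phi>], of "\<lambda>F. fps_nth F l"] X by (simp add: fps_mult_nth)
    then have \<psi>l: "fps_nth ?\<psi> l * fls_X = (if l = 0 then 1 else 0) - (\<Sum>t<l. fps_nth ?\<psi> t * fps_nth \<phi> (l - t))"
      using X by (simp add: atLeast0AtMost lessThan_Suc_atMost[symmetric] algebra_simps)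
    have "r + 1 \<noteq> 0" using less.prems M by (smt (verit) mult_nonneg_nonneg of_nat_0_le_iff)
    moreover have "fls_nth (fps_nth ?\<psi> t * fps_nth \<phi> (l - t)) (r + 1) = 0" if t: "t < l" for t
      unfolding fls_nth_mult_fsum
    proof (rule fsum_neutral)
      fix q
      show "fls_nth (fps_nth ?\<psi> t) q * fls_nth (fps_nth \<phi> (l - t)) (r + 1 - q) = 0"
      proof (cases "q < - 1 - M * int t")
        case False
        then have "r + 1 - q < 1 - M * int (l - t)" using less.prems t by (simp add: of_nat_diff algebra_simps)
        then show ?thesis using S t less.prems unfolding slope_bounded_def by auto
      qed (use less.IH[OF t] t less.prems in simp)
    qed
    ultimately have "fls_nth (fps_nth ?\<psi> l * fls_X) (r + 1) = 0"
      unfolding \<psi>l by (simp add: fls_nth_sum)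
    then show ?case by (simp add: fls_nth_times_X)
  qed
qed

lemma associate_slope_bounded:
  assumes X: "fps_nth \<phi> 0 = fls_X"
  obtains M where "0 \<le> M" "slope_bounded K M 1 \<phi>"
proof
  define M :: int where "M = Max (insert 0 ((\<lambda>l. 1 - fls_subdegree (fps_nth \<phi> l)) ` {1..K}))"
  show M0: "0 \<le> M" unfolding M_def by (intro Max_ge) auto
  show "slope_bounded K M 1 \<phi>"
    unfolding slope_bounded_def
  proof (intro allI impI)
    fix l r assume l: "l \<le> K" and r: "r < 1 - M * int l"
    show "fls_nth (fps_nth \<phi> l) r = 0"
    proof (cases "l = 0")
      case False
      have "1 - fls_subdegree (fps_nth \<phi> l) \<le> M"
        unfolding M_def using False l by (intro Max_ge) auto
      moreover have "M \<le> M * int l" using M0 False by (simp add: mult_le_cancel_left1)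
      ultimately show ?thesis using r by simp
    qed (use r X in simp)
  qed
qed

lemma phipow_eq_0_below:
  assumes X: "fps_nth \<phi> 0 = fls_X"
  obtains C where "\<And>K m l r. l \<le> K \<Longrightarrow> r < m - C K \<Longrightarrow> phipow \<phi> m l r = 0"
proof -
  have "\<exists>c. \<forall>m l r. l \<le> K \<longrightarrow> r < m - c \<longrightarrow> phipow \<phi> m l r = 0" for K
  proof -
    obtain M where M: "0 \<le> M" and S: "slope_bounded K M 1 \<phi>"
      using associate_slope_bounded[OF X] by blast
    have "slope_bounded K M m (\<phi> powi m)" for m
      using slope_bounded_power[OF S, of "nat m"]
        slope_bounded_power[OF slope_bounded_inverse[OF X M S], of "nat (- m)"]
      by (cases "0 \<le> m") (simp_all add: power_int_def)
    moreover have "M * int l \<le> M * int K" if "l \<le> K" for l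
      using that M by (simp add: mult_left_mono)
    ultimately show ?thesis
      by (intro exI[of _ "M * int K"]) (force simp: slope_bounded_def phipow_def)
  qed
  then show ?thesis using that by metis
qed

lemma phipow_add_fsum:
  assumes X: "fps_nth \<phi> 0 = fls_X" and k: "0 \<le> k"
  shows "fsum (\<lambda>u. if 0 \<le> fst u \<and> fst u \<le> k
      then phipow \<phi> m (nat (fst u)) (snd u) * phipow \<phi> n (nat (k - fst u)) (r - snd u) else 0)
    = phipow \<phi> (m + n) (nat k) r"
proof -
  obtain C where C: "\<And>K m l r. l \<le> K \<Longrightarrow> r < m - C K \<Longrightarrow> phipow \<phi> m l r = 0"
    using phipow_eq_0_below[OF X] by blast
  define K where "K = nat k"
  define F where "F t q = (if 0 \<le> t \<and> t \<le> k
      then phipow \<phi> m (nat t) q * phipow \<phi> n (nat (k - t)) (r - q) else 0)" for t q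
  have "{(t, q). F t q \<noteq> 0} \<subseteq> {0..k} \<times> {m - C K..r - n + C K}"
  proof (clarsimp simp: F_def split: if_splits)
    fix t q
    assume t: "0 \<le> t" "t \<le> k" and "phipow \<phi> m (nat t) q \<noteq> 0" "phipow \<phi> n (nat (k - t)) (r - q) \<noteq> 0"
    then have "m - C K \<le> q" "n - C K \<le> r - q"
      using C[of "nat t" K q m] C[of "nat (k - t)" K "r - q" n] by (force simp: K_def)+
    then show "m - C K \<le> q \<and> q \<le> r - n + C K" by linarith
  qed
  then have fin: "finite {(t, q). F t q \<noteq> 0}" by (rule finite_subset) simp
  have "fsum (\<lambda>u. F (fst u) (snd u)) = fsum (\<lambda>t. fsum (F t))"
    by (rule fsum_nested[OF fin, symmetric])
  also have "\<dots> = (\<Sum>t\<in>{0..k}. fsum (F t))"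
    by (rule fsum_eq_sum) (auto simp: F_def fsum_neutral)
  also have "\<dots> = (\<Sum>t=0..K. fsum (F (int t)))"
  proof -
    have "{0..k} = int ` {0..K}" using k by (simp add: K_def image_int_atLeastAtMost)
    then show ?thesis by (simp add: sum.reindex)
  qed
  also have "\<dots> = (\<Sum>t=0..K. fsum (\<lambda>q. phipow \<phi> m t q * phipow \<phi> n (K - t) (r - q)))"
    using k by (intro sum.cong refl arg_cong[where f=fsum] ext) (auto simp: F_def K_def nat_diff_distrib)
  also have "\<dots> = phipow \<phi> (m + n) K r"
    by (simp add: phipow_add X)
  finally show ?thesis by (simp add: F_def K_def)
qed

section \<open>Substitution \<open>x\<^sub>1 = \<phi>(x,z), x\<^sub>2 = x\<close>\<close>

lemma substW_def': "substW sc \<phi> F k p w = (if k < 0 then 0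
    else fsum (\<lambda>z. sc (phipow \<phi> (fst z) (nat k) (p - snd z)) (F (fst z) (snd z) w)))"
  unfolding substW_def by (simp add: case_prod_beta')

lemma substC_def': "substC \<phi> g k p = (if k < 0 then 0
    else fsum (\<lambda>z. phipow \<phi> (fst z) (nat k) (p - snd z) * g (fst z) (snd z)))"
  unfolding substC_def by (simp add: case_prod_beta')

lemma substC_eq_substW: "substC \<phi> g k p = substW (*) \<phi> (\<lambda>m n w. g m n) k p w"
  unfolding substW_def' substC_def' by simp

context
  fixes sc :: "complex \<Rightarrow> 'w::ab_group_add \<Rightarrow> 'w" and \<phi> :: "complex fls fps"
  assumes vs: "vector_space sc" and X: "fps_nth \<phi> 0 = fls_X"
begin

interpretation v: vector_space sc by (rule vs)

lemma substW_finite_support: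
  assumes F: "double_laurent (\<lambda>m n. F m n w)"
  shows "finite {z. sc (phipow \<phi> (fst z) K (p - snd z)) (F (fst z) (snd z) w) \<noteq> 0}"
proof -
  obtain C where C: "\<And>K m l r. l \<le> K \<Longrightarrow> r < m - C K \<Longrightarrow> phipow \<phi> m l r = 0"
    using phipow_eq_0_below[OF X] by blast
  obtain N where N1: "\<And>m n. m < N \<Longrightarrow> F m n w = 0" and N2: "\<And>m n. n < N \<Longrightarrow> F m n w = 0"
    using double_laurentE[OF F] by blast
  have "{z. sc (phipow \<phi> (fst z) K (p - snd z)) (F (fst z) (snd z) w) \<noteq> 0}
      \<subseteq> {N..p - N + C K} \<times> {N..p - N + C K}"
  proof (clarsimp)
    fix m n assume a: "phipow \<phi> m K (p - n) \<noteq> 0" and b: "F m n w \<noteq> 0"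
    have "N \<le> m" "N \<le> n" using b N1 N2 by (meson not_le)+
    moreover have "m - C K \<le> p - n" using a C[of K K "p - n" m] by force
    ultimately show "N \<le> m \<and> m \<le> p - N + C K \<and> N \<le> n \<and> n \<le> p - N + C K" by linarith
  qed
  then show ?thesis by (rule finite_subset) simp
qed

lemma substW_iter_laurent:
  assumes F: "double_laurent (\<lambda>m n. F m n w)"
  shows "iter_laurent (\<lambda>k p. substW sc \<phi> F k p w)"
proof -
  obtain C where C: "\<And>K m l r. l \<le> K \<Longrightarrow> r < m - C K \<Longrightarrow> phipow \<phi> m l r = 0"
    using phipow_eq_0_below[OF X] by blast
  obtain N where N1: "\<And>m n. m < N \<Longrightarrow> F m n w = 0" and N2: "\<And>m n. n < N \<Longrightarrow> F m n w = 0"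
    using double_laurentE[OF F] by blast
  have "sc (phipow \<phi> m (nat k) (q - n)) (F m n w) = 0" if "k \<le> R" "q < 2 * N - C (nat R)" for R k q m n
  proof (cases "F m n w = 0")
    case False
    then have "N \<le> m" "N \<le> n" using N1 N2 by (meson not_le)+
    then show ?thesis using that C[of "nat k" "nat R" "q - n" m] by simp
  qed simp
  then show ?thesis
    by (intro iter_laurentI[where K=0 and L="\<lambda>R. 2 * N - C (nat R)"])
      (simp_all add: substW_def' fsum_neutral)
qed

lemma substW_sum:
  assumes "finite T" and F: "\<And>t w. t \<in> T \<Longrightarrow> double_laurent (\<lambda>m n. F t m n w)"
  shows "substW sc \<phi> (\<lambda>m n w. \<Sum>t\<in>T. F t m n w) k p w = (\<Sum>t\<in>T. substW sc \<phi> (F t) k p w)"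
  unfolding substW_def' v.scale_sum_right
  by (auto intro!: fsum_sum[OF \<open>finite T\<close>] substW_finite_support[OF F])

end

lemma double_laurent_mult2:
  assumes vs: "vector_space sc" and f: "double_laurent f" and H: "double_laurent (\<lambda>m n. H m n w)"
  shows "double_laurent (\<lambda>m n. mult2 sc f H m n w)"
proof -
  interpret v: vector_space sc by (rule vs)
  obtain N1 where f1: "\<And>m n. m < N1 \<Longrightarrow> f m n = 0" and f2: "\<And>m n. n < N1 \<Longrightarrow> f m n = 0"
    using double_laurentE[OF f] by blast
  obtain N2 where h1: "\<And>m n. m < N2 \<Longrightarrow> H m n w = 0" and h2: "\<And>m n. n < N2 \<Longrightarrow> H m n w = 0"
    using double_laurentE[OF H] by blast
  have "sc (f i j) (H (m - i) (n - j) w) = 0" if "m < N1 + N2 \<or> n < N1 + N2" for m n i j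
  proof (rule ccontr)
    assume "sc (f i j) (H (m - i) (n - j) w) \<noteq> 0"
    then have "N1 \<le> i" "N1 \<le> j" "N2 \<le> m - i" "N2 \<le> n - j"
      using f1 f2 h1 h2 by (metis not_le v.scale_zero_left v.scale_zero_right)+
    then show False using that by linarith
  qed
  then show ?thesis
    unfolding double_laurent_def mult2_def by (intro exI[of _ "N1 + N2"]) (auto intro: fsum_neutral)
qed

context
  fixes sc :: "complex \<Rightarrow> 'w::ab_group_add \<Rightarrow> 'w" and \<phi> :: "complex fls fps"
    and f :: "int \<Rightarrow> int \<Rightarrow> complex" and H :: "int \<Rightarrow> int \<Rightarrow> 'w \<Rightarrow> 'w"
  assumes vs: "vector_space sc" and X: "fps_nth \<phi> 0 = fls_X"
    and f: "double_laurent f" and H: "\<And>w. double_laurent (\<lambda>m n. H m n w)"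
begin

interpretation v: vector_space sc by (rule vs)

text \<open>Both sides of \<open>(f H)(\<phi>(x,z),x) = f(\<phi>(x,z),x) H(\<phi>(x,z),x)\<close> expand to
  \<open>\<Sum>\<^sub>y \<Sum>\<^sub>x f\<^sub>y H\<^sub>x \<phi>^(y\<^sub>1+x\<^sub>1) x^(y\<^sub>2+x\<^sub>2)\<close>.\<close>
definition subst_product_coeff :: "int \<Rightarrow> int \<Rightarrow> 'w \<Rightarrow> 'w" where
  "subst_product_coeff k p w = fsum (\<lambda>y. fsum (\<lambda>x.
     sc (phipow \<phi> (fst y + fst x) (nat k) (p - snd y - snd x) * f (fst y) (snd y)) (H (fst x) (snd x) w)))"

lemma substW_mult2_eq_subst_product_coeff:
  assumes "0 \<le> k"
  shows "substW sc \<phi> (mult2 sc f H) k p w = subst_product_coeff k p w"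
proof -
  obtain C where C: "\<And>K m l r. l \<le> K \<Longrightarrow> r < m - C K \<Longrightarrow> phipow \<phi> m l r = 0"
    using phipow_eq_0_below[OF X] by blast
  obtain N1 where f1: "\<And>m n. m < N1 \<Longrightarrow> f m n = 0" and f2: "\<And>m n. n < N1 \<Longrightarrow> f m n = 0"
    using double_laurentE[OF f] by blast
  obtain N2 where h1: "\<And>m n. m < N2 \<Longrightarrow> H m n w = 0" and h2: "\<And>m n. n < N2 \<Longrightarrow> H m n w = 0"
    using double_laurentE[OF H] by blast
  define c where "c = C (nat k)"
  define A where "A z y = sc (phipow \<phi> (fst z) (nat k) (p - snd z) * f (fst y) (snd y))
      (H (fst z - fst y) (snd z - snd y) w)" for z y :: "int \<times> int"
  let ?U = "p - (N1 + N2) + c"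
  have "{(z, y). A z y \<noteq> 0} \<subseteq> ({N1 + N2..?U} \<times> {N1 + N2..?U}) \<times> ({N1..?U - N2} \<times> {N1..?U - N2})"
  proof (rule subsetI)
    fix s assume s_in: "s \<in> {(z, y). A z y \<noteq> 0}"
    obtain z1 z2 y1 y2 where s: "s = ((z1, z2), (y1, y2))" by (metis prod.collapse)
    have a: "phipow \<phi> z1 (nat k) (p - z2) \<noteq> 0" "f y1 y2 \<noteq> 0" "H (z1 - y1) (z2 - y2) w \<noteq> 0"
      using s_in by (auto simp: s A_def)
    have "N1 \<le> y1" "N1 \<le> y2" "N2 \<le> z1 - y1" "N2 \<le> z2 - y2" using a f1 f2 h1 h2 by (meson not_le)+
    moreover have "z1 - c \<le> p - z2" using a(1) C[of "nat k" "nat k" "p - z2" z1] by (force simp: c_def)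
    ultimately show "s \<in> ({N1 + N2..?U} \<times> {N1 + N2..?U}) \<times> ({N1..?U - N2} \<times> {N1..?U - N2})"
      by (simp add: s)
  qed
  then have fin: "finite {(z, y). A z y \<noteq> 0}" by (rule finite_subset) simp
  have "substW sc \<phi> (mult2 sc f H) k p w = fsum (\<lambda>z. fsum (\<lambda>y. A z y))"
    using assms unfolding substW_def' mult2_eq_multZ multZ_def' v.fsum_scale_right A_def by simp
  also have "\<dots> = fsum (\<lambda>y. fsum (\<lambda>z. A z y))" by (rule fsum_swap[OF fin])
  also have "\<dots> = subst_product_coeff k p w"
    unfolding subst_product_coeff_def
    using fsum_translate[of "\<lambda>z. A z y" "fst y" "snd y" for y] by (simp add: A_def algebra_simps)
  finally show ?thesis .
qed

text \<open>The contribution of \<open>f\<^sub>y H\<^sub>x\<close> to the coefficient of \<open>z^k x^p\<close> in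
  \<open>f(\<phi>(x,z),x) H(\<phi>(x,z),x)\<close> when the first factor supplies \<open>z^u\<^sub>1 x^u\<^sub>2\<close>.\<close>
definition subst_product_term :: "int \<Rightarrow> int \<Rightarrow> 'w \<Rightarrow> int \<times> int \<Rightarrow> int \<times> int \<Rightarrow> int \<times> int \<Rightarrow> 'w" where
  "subst_product_term k p w u y x = (if 0 \<le> fst u \<and> fst u \<le> k
      then sc (phipow \<phi> (fst y) (nat (fst u)) (snd u - snd y) * f (fst y) (snd y)
               * phipow \<phi> (fst x) (nat (k - fst u)) (p - snd u - snd x)) (H (fst x) (snd x) w)
      else 0)"

lemma multZ_substC_substW_eq_fsum:
  "multZ sc (substC \<phi> f) (substW sc \<phi> H) k p w
    = fsum (\<lambda>u. fsum (\<lambda>y. fsum (\<lambda>x. subst_product_term k p w u y x)))"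
proof -
  have "sc (substC \<phi> f (fst u) (snd u)) (substW sc \<phi> H (k - fst u) (p - snd u) w)
      = fsum (\<lambda>y. fsum (\<lambda>x. subst_product_term k p w u y x))" for u
  proof (cases "0 \<le> fst u \<and> fst u \<le> k")
    case True
    then have "sc (substC \<phi> f (fst u) (snd u)) (substW sc \<phi> H (k - fst u) (p - snd u) w)
      = sc (fsum (\<lambda>y. phipow \<phi> (fst y) (nat (fst u)) (snd u - snd y) * f (fst y) (snd y)))
          (fsum (\<lambda>x. sc (phipow \<phi> (fst x) (nat (k - fst u)) (p - snd u - snd x)) (H (fst x) (snd x) w)))"
      by (simp add: substC_def' substW_def')
    then show ?thesis
      unfolding v.fsum_scale_left unfolding v.fsum_scale_right
      using True by (simp add: subst_product_term_def mult.assoc)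
  qed (auto simp: subst_product_term_def substC_def' substW_def' fsum_neutral)
  then show ?thesis unfolding multZ_def' by simp
qed

lemma subst_product_term_finite: "finite {(u, v). subst_product_term k p w u (fst v) (snd v) \<noteq> 0}"
proof -
  obtain C where C: "\<And>K m l r. l \<le> K \<Longrightarrow> r < m - C K \<Longrightarrow> phipow \<phi> m l r = 0"
    using phipow_eq_0_below[OF X] by blast
  obtain N1 where f1: "\<And>m n. m < N1 \<Longrightarrow> f m n = 0" and f2: "\<And>m n. n < N1 \<Longrightarrow> f m n = 0"
    using double_laurentE[OF f] by blast
  obtain N2 where h1: "\<And>m n. m < N2 \<Longrightarrow> H m n w = 0" and h2: "\<And>m n. n < N2 \<Longrightarrow> H m n w = 0"
    using double_laurentE[OF H] by blast
  define c where "c = C (nat k)"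
  let ?Uy = "p - 2 * N2 + 2 * c - N1" and ?Ux = "p - 2 * N1 + 2 * c - N2"
  let ?B = "({0..k} \<times> {2 * N1 - c..p - 2 * N2 + c}) \<times> (({N1..?Uy} \<times> {N1..?Uy}) \<times> ({N2..?Ux} \<times> {N2..?Ux}))"
  have "{(u, v). subst_product_term k p w u (fst v) (snd v) \<noteq> 0} \<subseteq> ?B"
  proof (rule subsetI)
    fix s assume s_in: "s \<in> {(u, v). subst_product_term k p w u (fst v) (snd v) \<noteq> 0}"
    obtain u1 u2 y1 y2 x1 x2 where s: "s = ((u1, u2), ((y1, y2), (x1, x2)))" by (metis prod.collapse)
    have u: "0 \<le> u1" "u1 \<le> k" and a: "phipow \<phi> y1 (nat u1) (u2 - y2) \<noteq> 0" "f y1 y2 \<noteq> 0"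
      "phipow \<phi> x1 (nat (k - u1)) (p - u2 - x2) \<noteq> 0" "H x1 x2 w \<noteq> 0"
      using s_in by (auto simp: s subst_product_term_def split: if_splits)
    have "N1 \<le> y1" "N1 \<le> y2" "N2 \<le> x1" "N2 \<le> x2" using a f1 f2 h1 h2 by (meson not_le)+
    moreover have "y1 - c \<le> u2 - y2" "x1 - c \<le> p - u2 - x2"
      using a(1,3) C[of "nat u1" "nat k" "u2 - y2" y1] C[of "nat (k - u1)" "nat k" "p - u2 - x2" x1] u
      by (force simp: c_def)+
    ultimately show "s \<in> ?B" using u by (simp add: s)
  qed
  then show ?thesis by (rule finite_subset) simp
qed

lemma fsum_subst_product_term:
  assumes k: "0 \<le> k"
  shows "fsum (\<lambda>u. subst_product_term k p w u y x)
    = sc (phipow \<phi> (fst y + fst x) (nat k) (p - snd y - snd x) * f (fst y) (snd y)) (H (fst x) (snd x) w)"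
proof -
  define E where "E u = (if 0 \<le> fst u \<and> fst u \<le> k then phipow \<phi> (fst y) (nat (fst u)) (snd u)
      * phipow \<phi> (fst x) (nat (k - fst u)) (p - snd y - snd x - snd u) else 0)" for u :: "int \<times> int"
  have "subst_product_term k p w u y x = sc (E (fst u, snd u - snd y) * f (fst y) (snd y)) (H (fst x) (snd x) w)" for u
    by (simp add: subst_product_term_def E_def algebra_simps)
  then have "fsum (\<lambda>u. subst_product_term k p w u y x)
      = sc (fsum (\<lambda>u. E (fst u, snd u - snd y)) * f (fst y) (snd y)) (H (fst x) (snd x) w)"
    by (simp add: v.fsum_scale_left fsum_mult_right)
  also have "fsum (\<lambda>u. E (fst u, snd u - snd y)) = fsum E"
    using fsum_translate[of E 0 "- snd y"] by simp
  also have "\<dots> = phipow \<phi> (fst y + fst x) (nat k) (p - snd y - snd x)"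
    unfolding E_def[abs_def] by (rule phipow_add_fsum[OF X k])
  finally show ?thesis .
qed

lemma multZ_substC_substW_eq_subst_product_coeff:
  assumes "0 \<le> k"
  shows "multZ sc (substC \<phi> f) (substW sc \<phi> H) k p w = subst_product_coeff k p w"
  unfolding multZ_substC_substW_eq_fsum fsum_rotate[OF subst_product_term_finite]
    subst_product_coeff_def fsum_subst_product_term[OF assms] ..

lemma substW_mult2: "substW sc \<phi> (mult2 sc f H) = multZ sc (substC \<phi> f) (substW sc \<phi> H)"
proof (intro ext)
  fix k p w
  show "substW sc \<phi> (mult2 sc f H) k p w = multZ sc (substC \<phi> f) (substW sc \<phi> H) k p w"
  proof (cases "0 \<le> k")
    case False
    then show ?thesis
      unfolding multZ_def' by (auto intro!: fsum_neutral simp: substW_def' substC_def')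
  qed (simp add: substW_mult2_eq_subst_product_coeff multZ_substC_substW_eq_subst_product_coeff)
qed

end

section \<open>Substitution into scalar series\<close>

lemma vector_space_complex: "vector_space ((*) :: complex \<Rightarrow> complex \<Rightarrow> complex)"
  by unfold_locales (simp_all add: algebra_simps)

lemma multZ_const_eq_conv2: "multZ (*) c (\<lambda>k p w. d k p) = (\<lambda>k p w. conv2 c d k p)"
  by (intro ext) (simp add: multZ_def' conv2_def')

lemma double_laurent_conv2: "double_laurent f \<Longrightarrow> double_laurent g \<Longrightarrow> double_laurent (conv2 f g)"
  using double_laurent_mult2[OF vector_space_complex, of f "\<lambda>m n w. g m n" 0]
  by (simp add: mult2_eq_multZ multZ_const_eq_conv2)

lemma conv2_assoc:
  assumes "double_laurent f" "double_laurent g" "double_laurent h"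
  shows "conv2 f (conv2 g h) = conv2 (conv2 f g) h"
proof -
  have "multZ (*) f (multZ (*) g (\<lambda>k p w. h k p)) = multZ (*) (conv2 f g) (\<lambda>k p w. h k p)"
    by (rule multZ_assoc[OF vector_space_complex]) (use assms in \<open>auto intro: double_laurent_iter_laurent\<close>)
  then have "(\<lambda>k p (w::complex). conv2 f (conv2 g h) k p) = (\<lambda>k p w. conv2 (conv2 f g) h k p)"
    by (simp add: multZ_const_eq_conv2)
  then show ?thesis by (intro ext) (drule fun_cong, drule fun_cong, drule fun_cong, simp)
qed

lemma conv2_commute: "conv2 f g = conv2 g f"
proof (intro ext)
  fix k p
  have "bij (\<lambda>z::int \<times> int. (k - fst z, p - snd z))"
    by (rule bij_betw_byWitness[where f'="\<lambda>z. (k - fst z, p - snd z)"]) auto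
  from fsum_reindex_bij[OF this, of "\<lambda>z. g (fst z) (snd z) * f (k - fst z) (p - snd z)"]
  show "conv2 f g k p = conv2 g f k p"
    unfolding conv2_def' by (simp add: mult.commute)
qed

definition subst_fls :: "complex fls fps \<Rightarrow> (int \<Rightarrow> int \<Rightarrow> complex) \<Rightarrow> complex fls fls" where
  "subst_fls \<phi> f = fps_to_fls (to_flsfps (substC \<phi> f))"

definition delta2 :: "int \<Rightarrow> int \<Rightarrow> complex" where
  "delta2 m n = (if m = 0 \<and> n = 0 then 1 else 0)"

lemma double_laurent_delta2: "double_laurent delta2"
  unfolding double_laurent_def delta2_def by (intro exI[of _ 0]) auto

context
  fixes \<phi> :: "complex fls fps"
  assumes X: "fps_nth \<phi> 0 = fls_X"
begin

lemma substC_eq_coeffs2: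
  assumes "double_laurent f"
  shows "substC \<phi> f = coeffs2 (subst_fls \<phi> f)"
proof -
  have "iter_laurent (substC \<phi> f)"
    using substW_iter_laurent[OF vector_space_complex X, of "\<lambda>m n w. f m n" 0] assms
    by (simp flip: substC_eq_substW)
  then show ?thesis
    unfolding subst_fls_def by (intro coeffs2_to_flsfps[symmetric]) (auto simp: substC_def')
qed

lemma substC_conv2:
  assumes f: "double_laurent f" and g: "double_laurent g"
  shows "substC \<phi> (conv2 f g) = conv2 (substC \<phi> f) (substC \<phi> g)"
proof (intro ext)
  fix k p
  have "mult2 (*) f (\<lambda>m n w. g m n) = (\<lambda>m n w. conv2 f g m n)"
    by (simp add: mult2_eq_multZ multZ_const_eq_conv2)
  moreover have "substW (*) \<phi> (\<lambda>m n w. h m n) = (\<lambda>k p w. substC \<phi> h k p)" for h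
    by (intro ext) (rule substC_eq_substW[symmetric])
  ultimately have "(\<lambda>k p w. substC \<phi> (conv2 f g) k p)
      = multZ (*) (substC \<phi> f) (\<lambda>k p w. substC \<phi> g k p)"
    using substW_mult2[OF vector_space_complex X f, of "\<lambda>m n w. g m n"] g by simp
  then show "substC \<phi> (conv2 f g) k p = conv2 (substC \<phi> f) (substC \<phi> g) k p"
    by (simp add: multZ_const_eq_conv2) (metis (no_types))
qed

lemma subst_fls_conv2:
  assumes f: "double_laurent f" and g: "double_laurent g"
  shows "subst_fls \<phi> (conv2 f g) = subst_fls \<phi> f * subst_fls \<phi> g"
proof (rule coeffs2_inject)
  have "coeffs2 (subst_fls \<phi> (conv2 f g)) = conv2 (substC \<phi> f) (substC \<phi> g)"
    using substC_eq_coeffs2[OF double_laurent_conv2[OF f g]] substC_conv2[OF f g] by simp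
  then show "coeffs2 (subst_fls \<phi> (conv2 f g)) = coeffs2 (subst_fls \<phi> f * subst_fls \<phi> g)"
    by (simp add: substC_eq_coeffs2 f g conv2_coeffs2)
qed

lemma subst_fls_delta2: "subst_fls \<phi> delta2 = 1"
proof (rule coeffs2_inject)
  have "substC \<phi> delta2 k p = coeffs2 1 k p" for k p
    using fsum_single[of "(0, 0)" "\<lambda>z. phipow \<phi> (fst z) (nat k) (p - snd z) * delta2 (fst z) (snd z)"]
    by (auto simp: substC_def' coeffs2_def phipow_def delta2_def)
  then show "coeffs2 (subst_fls \<phi> delta2) = coeffs2 1"
    using substC_eq_coeffs2[OF double_laurent_delta2] by auto
qed

end

section \<open>Quasi compatible pairs\<close>

lemma EW_zero: "EW sc a \<Longrightarrow> a m 0 = 0"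
  unfolding EW_def Vector_Spaces.linear_iff by (metis add_cancel_right_right)

lemma prod12_iter_laurent:
  assumes a: "EW sc a" and b: "EW sc b"
  shows "iter_laurent (\<lambda>k p. prod12 a b p k w)"
proof -
  obtain N where N: "\<And>n. n < N \<Longrightarrow> b n w = 0" using b unfolding EW_def by blast
  have "\<forall>v. \<exists>M. \<forall>m<M. a m v = 0" using a unfolding EW_def by blast
  then obtain M where M: "\<And>v m. m < M v \<Longrightarrow> a m v = 0" by metis
  let ?L = "\<lambda>R. Min (insert 0 ((\<lambda>n. M (b n w)) ` {N..R}))"
  have "a p (b k w) = 0" if "k \<le> R" "p < ?L R" for R k p
  proof (cases "k < N")
    case False
    then have "?L R \<le> M (b k w)" using that by (intro Min_le) auto
    then have "p < M (b k w)" using that(2) by linarith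
    then show ?thesis using M by simp
  qed (simp add: N EW_zero[OF a])
  then show ?thesis
    by (intro iter_laurentI[where K=N and L="?L"]) (simp_all add: prod12_def N EW_zero[OF a])
qed

lemma qc_witness_double_laurent: "qc_witness sc \<phi> a b p \<Longrightarrow> double_laurent p"
  unfolding qc_witness_def pow2_def double_laurent_def by (intro exI[of _ 0]) blast

lemma qc_witness_product_double_laurent:
  "qc_witness sc \<phi> a b p \<Longrightarrow> double_laurent (\<lambda>m n. mult2 sc p (prod12 a b) m n w)"
  unfolding qc_witness_def trunc2_def double_laurent_def by blast

lemma qc_witness_subst_fls_nonzero:
  assumes X: "fps_nth \<phi> 0 = fls_X" and p: "qc_witness sc \<phi> a b p"
  shows "subst_fls \<phi> p \<noteq> 0"
proof
  assume "subst_fls \<phi> p = 0"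
  then have "substC \<phi> p = coeffs2 0"
    using substC_eq_coeffs2[OF X qc_witness_double_laurent[OF p]] by simp
  with p show False unfolding qc_witness_def by (auto simp: coeffs2_def)
qed

lemma Yp_eq_multZ: "Yp sc \<phi> p a b
    = multZ sc (coeffs2 (inverse (subst_fls \<phi> p))) (substW sc \<phi> (mult2 sc p (prod12 a b)))"
  unfolding Yp_def pinv_eq_coeffs2 subst_fls_def ..

lemma common_multiple_exists:
  assumes X: "fps_nth \<phi> 0 = fls_X" and "finite I"
    and P: "\<And>i. i \<in> I \<Longrightarrow> double_laurent (P i) \<and> subst_fls \<phi> (P i) \<noteq> 0"
  shows "\<exists>Q. double_laurent Q \<and> subst_fls \<phi> Q \<noteq> 0 \<and>
    (\<forall>i\<in>I. \<exists>R. double_laurent R \<and> Q = conv2 R (P i))"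
  using \<open>finite I\<close> P
proof (induction I rule: finite_induct)
  case empty
  show ?case using double_laurent_delta2 subst_fls_delta2[OF X] by auto
next
  case (insert j I)
  have Pj: "double_laurent (P j)" "subst_fls \<phi> (P j) \<noteq> 0" using insert.prems by auto
  obtain Q where Q: "double_laurent Q" "subst_fls \<phi> Q \<noteq> 0"
    and R: "\<And>i. i \<in> I \<Longrightarrow> \<exists>R. double_laurent R \<and> Q = conv2 R (P i)"
    using insert.IH insert.prems by blast
  have "\<exists>R'. double_laurent R' \<and> conv2 Q (P j) = conv2 R' (P i)" if i: "i \<in> insert j I" for i
  proof (cases "i = j")
    case False
    then obtain R where R: "double_laurent R" "Q = conv2 R (P i)" using R i by blast
    have Pi: "double_laurent (P i)" using insert.prems i by blast
    have "conv2 Q (P j) = conv2 R (conv2 (P j) (P i))"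
      unfolding R(2) conv2_assoc[OF R(1) Pi Pj(1), symmetric] conv2_commute[of "P i"] ..
    then show ?thesis
      using conv2_assoc[OF R(1) Pj(1) Pi] double_laurent_conv2[OF R(1) Pj(1)] by auto
  qed (use Q(1) in blast)
  moreover have "subst_fls \<phi> (conv2 Q (P j)) \<noteq> 0"
    using Q Pj subst_fls_conv2[OF X Q(1) Pj(1)] by simp
  ultimately show ?case using double_laurent_conv2[OF Q(1) Pj(1)] by blast
qed

context
  fixes sc :: "complex \<Rightarrow> 'w::ab_group_add \<Rightarrow> 'w" and \<phi> :: "complex fls fps"
  assumes vs: "vector_space sc" and X: "fps_nth \<phi> 0 = fls_X"
begin

lemma coeffs2_mult_multZ:
  assumes "\<And>w. iter_laurent (\<lambda>k p. S k p w)"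
  shows "multZ sc (coeffs2 A) (multZ sc (coeffs2 B) S) = multZ sc (coeffs2 (A * B)) S"
  unfolding multZ_assoc[OF vs coeffs2_iter_laurent coeffs2_iter_laurent assms] conv2_coeffs2 ..

lemma substW_mult2_coeffs2:
  assumes "double_laurent f" "\<And>w. double_laurent (\<lambda>m n. H m n w)"
  shows "substW sc \<phi> (mult2 sc f H) = multZ sc (coeffs2 (subst_fls \<phi> f)) (substW sc \<phi> H)"
  unfolding substW_mult2[OF vs X assms] substC_eq_coeffs2[OF X assms(1)] ..

lemma substW_mult2_cancel:
  assumes Q: "double_laurent Q" "subst_fls \<phi> Q \<noteq> 0" and T: "\<And>w. double_laurent (\<lambda>m n. T m n w)"
  shows "multZ sc (coeffs2 (inverse (subst_fls \<phi> Q))) (substW sc \<phi> (mult2 sc Q T)) = substW sc \<phi> T"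
  unfolding substW_mult2_coeffs2[OF Q(1) T] coeffs2_mult_multZ[OF substW_iter_laurent[OF vs X T]]
  using Q(2) by (simp add: multZ_one[OF vs])

lemma multZ_sum_substW:
  assumes "finite I" and F: "\<And>i w. i \<in> I \<Longrightarrow> double_laurent (\<lambda>m n. F i m n w)"
  shows "(\<lambda>k p w. \<Sum>i\<in>I. multZ sc (coeffs2 A) (substW sc \<phi> (F i)) k p w)
    = multZ sc (coeffs2 A) (substW sc \<phi> (\<lambda>m n w. \<Sum>i\<in>I. F i m n w))"
proof -
  have "substW sc \<phi> (\<lambda>m n w. \<Sum>i\<in>I. F i m n w) = (\<lambda>k p w. \<Sum>i\<in>I. substW sc \<phi> (F i) k p w)"
    by (intro ext) (rule substW_sum[OF vs X assms])
  then show ?thesis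
    by (intro ext) (simp add: multZ_sum[OF vs coeffs2_iter_laurent \<open>finite I\<close>] substW_iter_laurent[OF vs X F])
qed

text \<open>Clearing the denominator \<open>p(\<phi>(x,z),x)\<close> of \<open>Y\<^sup>\<phi>\<^sub>\<E>(a(x),z)b(x)\<close> by a multiple \<open>Q = R p\<close>.\<close>
lemma multZ_substC_Yp:
  assumes a: "EW sc a" and b: "EW sc b" and p: "qc_witness sc \<phi> a b p"
    and g: "double_laurent g" and R: "double_laurent R" and Q: "Q = conv2 R p"
    and Q_nz: "subst_fls \<phi> Q \<noteq> 0"
  shows "double_laurent (\<lambda>m n. mult2 sc Q (mult2 sc g (prod12 a b)) m n w)"
    and "multZ sc (substC \<phi> g) (Yp sc \<phi> p a b)
      = multZ sc (coeffs2 (inverse (subst_fls \<phi> Q))) (substW sc \<phi> (mult2 sc Q (mult2 sc g (prod12 a b))))"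
proof -
  let ?H = "mult2 sc p (prod12 a b)" and ?S = "substW sc \<phi> (mult2 sc p (prod12 a b))"
  note assoc = multZ_assoc_transposed[OF vs double_laurent_transpose_iter_laurent
      double_laurent_transpose_iter_laurent prod12_iter_laurent[OF a b]]
  have pDL: "double_laurent p" and H: "\<And>w. double_laurent (\<lambda>m n. ?H m n w)"
    using p by (auto intro: qc_witness_double_laurent qc_witness_product_double_laurent)
  have QDL: "double_laurent Q" unfolding Q by (rule double_laurent_conv2[OF R pDL])
  have RH: "\<And>w. double_laurent (\<lambda>m n. mult2 sc R ?H m n w)"
    by (rule double_laurent_mult2[OF vs R H])
  have "mult2 sc g (mult2 sc R ?H) = mult2 sc (conv2 g Q) (prod12 a b)"
    unfolding mult2_eq_multZ Q assoc[OF R pDL] assoc[OF g double_laurent_conv2[OF R pDL]] ..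
  also have "\<dots> = mult2 sc Q (mult2 sc g (prod12 a b))"
    unfolding mult2_eq_multZ assoc[OF QDL g] conv2_commute[of g] ..
  finally have V: "mult2 sc Q (mult2 sc g (prod12 a b)) = mult2 sc g (mult2 sc R ?H)" ..
  show "double_laurent (\<lambda>m n. mult2 sc Q (mult2 sc g (prod12 a b)) m n w)"
    unfolding V by (rule double_laurent_mult2[OF vs g RH])
  have SL: "\<And>w. iter_laurent (\<lambda>k p. ?S k p w)" by (rule substW_iter_laurent[OF vs X H])
  have sQ: "subst_fls \<phi> Q = subst_fls \<phi> R * subst_fls \<phi> p"
    unfolding Q by (rule subst_fls_conv2[OF X R pDL])
  have "subst_fls \<phi> R \<noteq> 0" using Q_nz sQ by auto
  have "multZ sc (substC \<phi> g) (Yp sc \<phi> p a b)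
      = multZ sc (coeffs2 (subst_fls \<phi> g * inverse (subst_fls \<phi> p))) ?S"
    unfolding Yp_eq_multZ substC_eq_coeffs2[OF X g] coeffs2_mult_multZ[OF SL] ..
  moreover have "multZ sc (coeffs2 (inverse (subst_fls \<phi> Q))) (substW sc \<phi> (mult2 sc g (mult2 sc R ?H)))
      = multZ sc (coeffs2 (inverse (subst_fls \<phi> Q) * (subst_fls \<phi> g * subst_fls \<phi> R))) ?S"
    unfolding substW_mult2_coeffs2[OF g RH] substW_mult2_coeffs2[OF R H] coeffs2_mult_multZ[OF SL]
      coeffs2_mult_multZ[OF SL] ..
  ultimately show "multZ sc (substC \<phi> g) (Yp sc \<phi> p a b)
      = multZ sc (coeffs2 (inverse (subst_fls \<phi> Q))) (substW sc \<phi> (mult2 sc Q (mult2 sc g (prod12 a b))))"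
    unfolding V sQ using \<open>subst_fls \<phi> R \<noteq> 0\<close> by (simp add: field_simps)
qed

end

theorem lemma4p6:
  fixes sc :: "complex \<Rightarrow> 'w::ab_group_add \<Rightarrow> 'w"
    and \<phi> :: "complex fls fps"
    and n :: nat
    and a b :: "nat \<Rightarrow> int \<Rightarrow> 'w \<Rightarrow> 'w"
    and g :: "nat \<Rightarrow> int \<Rightarrow> int \<Rightarrow> complex"
  assumes "vector_space sc"
    and "associate \<phi>"
    and "\<forall>i\<in>{1..n}. EW sc (a i) \<and> EW sc (b i) \<and> quasi_compat sc \<phi> (a i) (b i)"
    and "\<forall>i\<in>{1..n}. laur2 (g i)"
    and "trunc2 (\<lambda>m k w. \<Sum>i=1..n. mult2 sc (g i) (prod12 (a i) (b i)) m k w)"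
  shows "(\<lambda>k p w. \<Sum>i=1..n. multZ sc (substC \<phi> (g i)) (YE sc \<phi> (a i) (b i)) k p w)
       = substW sc \<phi> (\<lambda>m k w. \<Sum>i=1..n. mult2 sc (g i) (prod12 (a i) (b i)) m k w)"
proof -
  note vs = assms(1)
  have X: "fps_nth \<phi> 0 = fls_X" using assms(2) unfolding associate_def by blast
  define p where "p i = (SOME p. qc_witness sc \<phi> (a i) (b i) p)" for i
  define T where "T = (\<lambda>m k w. \<Sum>i=1..n. mult2 sc (g i) (prod12 (a i) (b i)) m k w)"
  have ab: "EW sc (a i)" "EW sc (b i)" and g: "double_laurent (g i)" if "i \<in> {1..n}" for i
    using assms(3,4) that unfolding laur2_def double_laurent_def by auto
  have p: "qc_witness sc \<phi> (a i) (b i) (p i)" if "i \<in> {1..n}" for i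
    using assms(3) that unfolding quasi_compat_def p_def by (metis someI_ex)
  obtain Q where Q: "double_laurent Q" "subst_fls \<phi> Q \<noteq> 0"
    and R: "\<forall>i\<in>{1..n}. \<exists>R. double_laurent R \<and> Q = conv2 R (p i)"
    using common_multiple_exists[OF X, of "{1..n}" p]
    by (meson finite_atLeastAtMost p qc_witness_double_laurent qc_witness_subst_fls_nonzero[OF X])
  define V where "V i = mult2 sc Q (mult2 sc (g i) (prod12 (a i) (b i)))" for i
  have V: "double_laurent (\<lambda>m n. V i m n w)"
    and Y: "multZ sc (substC \<phi> (g i)) (YE sc \<phi> (a i) (b i))
      = multZ sc (coeffs2 (inverse (subst_fls \<phi> Q))) (substW sc \<phi> (V i))" if "i \<in> {1..n}" for i w
    using R multZ_substC_Yp[OF vs X ab[OF that] p[OF that] g[OF that] _ _ Q(2)] that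
    unfolding V_def YE_def p_def[symmetric] by blast+
  have T: "double_laurent (\<lambda>m n. T m n w)" for w
    using assms(5) unfolding trunc2_def T_def double_laurent_def by blast
  have sum_V: "(\<lambda>m k w. \<Sum>i=1..n. V i m k w) = mult2 sc Q T"
    unfolding T_def V_def mult2_eq_multZ
    by (intro ext multZ_sum_transposed[OF vs double_laurent_transpose_iter_laurent[OF Q(1)], symmetric])
      (use g ab in \<open>auto intro!: multZ_iter_laurent_transposed[OF vs] prod12_iter_laurent
        double_laurent_transpose_iter_laurent\<close>)
  have "(\<lambda>k p w. \<Sum>i=1..n. multZ sc (substC \<phi> (g i)) (YE sc \<phi> (a i) (b i)) k p w)
      = (\<lambda>k p w. \<Sum>i=1..n. multZ sc (coeffs2 (inverse (subst_fls \<phi> Q))) (substW sc \<phi> (V i)) k p w)"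
    using Y by (intro ext sum.cong) auto
  also have "\<dots> = multZ sc (coeffs2 (inverse (subst_fls \<phi> Q))) (substW sc \<phi> (\<lambda>m k w. \<Sum>i=1..n. V i m k w))"
    by (rule multZ_sum_substW[OF vs X finite_atLeastAtMost V])
  also have "\<dots> = multZ sc (coeffs2 (inverse (subst_fls \<phi> Q))) (substW sc \<phi> (mult2 sc Q T))"
    unfolding sum_V ..
  also have "\<dots> = substW sc \<phi> T"
    by (rule substW_mult2_cancel[OF vs X Q T])
  finally show ?thesis unfolding T_def .
qed

end
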